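(* Let $k\in\mathbb N_0$ and $(l,m)\in\mathcal N$. Then $$\sup_{0\le r\le1}\Big|\frac{d^k}{dr^k}R_m^{|l|}(r)\Big|\le m^{2k}\qquad\text{and}\qquad\sup_{0\le s\le1}\Big|\frac{d^k}{ds^k}U_m(s)\Big|\le(m+1)m^{2k},$$ with the convention $0^0=1$.
   Context: $\mathcal N=\{(l,m):m\in\mathbb N_0,\ l\in\{m,m-2,\dots,-m\}\}$. For $(l,m)\in\mathcal N$ the radial polynomial is $R_m^{|l|}(r)=\sum_{j=0}^{(m-|l|)/2}(-1)^j\frac{(m-j)!}{j!\,((m+|l|)/2-j)!\,((m-|l|)/2-j)!}r^{m-2j}$, and $U_m$ denotes the $m$-th Chebyshev polynomial of the second kind. *)

theory Defs
  imports "HOL-Computational_Algebra.Polynomial"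
begin

definition zernike_radial :: "nat \<Rightarrow> nat \<Rightarrow> real poly" where
  "zernike_radial m n =
     (\<Sum>j\<le>(m - n) div 2.
        monom ((-1) ^ j * fact (m - j) /
               (fact j * fact ((m + n) div 2 - j) * fact ((m - n) div 2 - j))) (m - 2 * j))"

fun chebyshev_U :: "nat \<Rightarrow> real poly" where
  "chebyshev_U 0 = 1"
| "chebyshev_U (Suc 0) = [:0, 2:]"
| "chebyshev_U (Suc (Suc n)) = [:0, 2:] * chebyshev_U (Suc n) - chebyshev_U n"

end

theory Submission
  imports Defs
begin

(* A Markov-type argument on the cone of nonnegative combinations of the Chebyshev polynomials
   T_0, ..., T_M.  On [-1,1] every p in this cone satisfies |p| <= p(1).  Since T_j' = j U_(j-1)
   and U_(j-1) is itself in the cone of degree j - 1 with U_(j-1)(1) = j, differentiation maps the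
   cone of degree M into the cone of degree M - 1 and multiplies the value at 1 by at most M^2.
   Hence k derivatives of p are bounded on [-1,1] by M^(2k) p(1).  It remains to place U_m and
   R_m^n in the cone of degree m, with U_m(1) = m + 1 and R_m^n(1) = 1.  For U_m this follows from
   U_(j+2) = U_j + 2 T_(j+2).  For R = R_(a+b)^(a-b), R(cos phi) is the coefficient of z^a in
   (cos phi + z sin phi)^b (z cos phi - sin phi)^a; expanding both factors in the eigenvectors
   z + i, z - i of the rotation gives R(cos phi) as a combination of the cos((2p-a-b) phi) whose
   coefficients are positive multiples of squares. *)

section \<open>Chebyshev polynomials of the first kind\<close>

fun chebyshev_T :: "nat \<Rightarrow> real poly" where
  "chebyshev_T 0 = 1"
| "chebyshev_T (Suc 0) = [:0, 1:]"
| "chebyshev_T (Suc (Suc n)) = [:0, 2:] * chebyshev_T (Suc n) - chebyshev_T n"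

lemma two_term_recurrence_unique:
  fixes f g :: "nat \<Rightarrow> 'a::comm_ring_1"
  assumes "\<And>n. f (Suc (Suc n)) = c * f (Suc n) - f n"
      and "\<And>n. g (Suc (Suc n)) = c * g (Suc n) - g n"
      and "f 0 = g 0" and "f 1 = g 1"
  shows "f n = g n"
  by (induction n rule: induct_nat_012) (simp_all add: assms(1-3) assms(4)[unfolded One_nat_def])

lemma chebyshev_U_Suc_Suc_eq:
  "chebyshev_U (Suc (Suc n)) = chebyshev_U n + smult 2 (chebyshev_T (Suc (Suc n)))"
proof -
  have "chebyshev_U (Suc (Suc n)) - chebyshev_U n = smult 2 (chebyshev_T (Suc (Suc n)))"
    by (rule two_term_recurrence_unique[where c = "[:0, 2:]"
          and f = "\<lambda>n. chebyshev_U (Suc (Suc n)) - chebyshev_U n"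
          and g = "\<lambda>n. smult 2 (chebyshev_T (Suc (Suc n)))"])
       (simp_all only: chebyshev_U.simps chebyshev_T.simps numeral_mult_conv_smult[symmetric],
        algebra+, simp_all add: numeral_2_eq_2 numeral_3_eq_3 one_pCons numeral_poly)
  then show ?thesis by (simp only: diff_eq_eq add.commute)
qed

lemma chebyshev_T_Suc_Suc_eq:
  "chebyshev_T (Suc (Suc n)) = [:0, 1:] * chebyshev_U (Suc n) - chebyshev_U n"
  by (rule two_term_recurrence_unique[where c = "[:0, 2:]"
        and f = "\<lambda>n. chebyshev_T (Suc (Suc n))"
        and g = "\<lambda>n. [:0, 1:] * chebyshev_U (Suc n) - chebyshev_U n"])
     (simp_all only: chebyshev_U.simps chebyshev_T.simps, algebra, simp_all add: numeral_2_eq_2 one_pCons)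

lemma pderiv_chebyshev_T:
  "pderiv (chebyshev_T (Suc n)) = smult (real (Suc n)) (chebyshev_U n)"
proof (induction n rule: induct_nat_012)
  case (ge2 n)
  have "pderiv (chebyshev_T (Suc (Suc (Suc n)))) =
        smult 2 (chebyshev_T (Suc (Suc n))) + [:0, 2:] * pderiv (chebyshev_T (Suc (Suc n)))
        - pderiv (chebyshev_T (Suc n))"
    by (simp only: chebyshev_T.simps(3)[of "Suc n"] pderiv_mult pderiv_diff) (simp add: pderiv_pCons)
  also have "\<dots> = smult 2 ([:0, 1:] * chebyshev_U (Suc n) - chebyshev_U n)
        + [:0, 2:] * smult (real (Suc (Suc n))) (chebyshev_U (Suc n))
        - smult (real (Suc n)) (chebyshev_U n)"
    using ge2 chebyshev_T_Suc_Suc_eq[of n] by simp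
  also have "\<dots> = smult (real (Suc (Suc (Suc n)))) (chebyshev_U (Suc (Suc n)))"
    by (intro poly_ext) (simp add: algebra_simps)
  finally show ?case .
qed (simp_all add: pderiv_pCons numeral_2_eq_2 one_pCons)

lemma poly_chebyshev_T_cos: "poly (chebyshev_T n) (cos t) = cos (real n * t)"
proof (induction n rule: induct_nat_012)
  case (ge2 n)
  have "cos (real (Suc (Suc n)) * t) = 2 * cos t * cos (real (Suc n) * t) - cos (real n * t)"
    using cos_add[of "real (Suc n) * t" t] cos_diff[of "real (Suc n) * t" t]
    by (simp add: algebra_simps)
  with ge2 show ?case by simp
qed simp_all

lemma abs_poly_chebyshev_T_le_1: "\<bar>x\<bar> \<le> 1 \<Longrightarrow> \<bar>poly (chebyshev_T n) x\<bar> \<le> 1"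
  using poly_chebyshev_T_cos[of n "arccos x"] by (simp add: cos_arccos_abs)

lemma poly_chebyshev_T_1: "poly (chebyshev_T n) 1 = 1"
  using poly_chebyshev_T_cos[of n 0] by simp

lemma poly_chebyshev_U_1: "poly (chebyshev_U n) 1 = real n + 1"
  by (induction n rule: induct_nat_012) simp_all

section \<open>Nonnegative combinations of Chebyshev polynomials\<close>

inductive chebyshev_cone :: "nat \<Rightarrow> real poly \<Rightarrow> bool" for M where
  zero: "chebyshev_cone M 0"
| add_T: "chebyshev_cone M p \<Longrightarrow> 0 \<le> c \<Longrightarrow> j \<le> M \<Longrightarrow>
    chebyshev_cone M (p + smult c (chebyshev_T j))"

lemma chebyshev_cone_add:
  "chebyshev_cone M q \<Longrightarrow> chebyshev_cone M p \<Longrightarrow> chebyshev_cone M (p + q)"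
proof (induction q rule: chebyshev_cone.induct)
  case (add_T q c j)
  then have "chebyshev_cone M ((p + q) + smult c (chebyshev_T j))"
    by (intro chebyshev_cone.add_T) auto
  then show ?case by (simp add: add.assoc)
qed simp

lemma chebyshev_cone_smult:
  "chebyshev_cone M p \<Longrightarrow> 0 \<le> a \<Longrightarrow> chebyshev_cone M (smult a p)"
proof (induction p rule: chebyshev_cone.induct)
  case (add_T q c j)
  then have "chebyshev_cone M (smult a q + smult (a * c) (chebyshev_T j))"
    by (intro chebyshev_cone.add_T) auto
  then show ?case by (simp add: smult_add_right)
qed (simp add: chebyshev_cone.zero)

lemma chebyshev_cone_mono: "chebyshev_cone M p \<Longrightarrow> M \<le> M' \<Longrightarrow> chebyshev_cone M' p"
  by (induction p rule: chebyshev_cone.induct) (auto intro: chebyshev_cone.intros)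

lemma chebyshev_cone_chebyshev_T:
  "j \<le> M \<Longrightarrow> 0 \<le> c \<Longrightarrow> chebyshev_cone M (smult c (chebyshev_T j))"
  using chebyshev_cone.add_T[OF chebyshev_cone.zero] by fastforce

lemma chebyshev_cone_sum:
  "(\<And>i. i \<in> A \<Longrightarrow> chebyshev_cone M (f i)) \<Longrightarrow> chebyshev_cone M (sum f A)"
  by (induction A rule: infinite_finite_induct)
     (simp_all add: chebyshev_cone.zero chebyshev_cone_add)

lemma chebyshev_cone_chebyshev_U: "chebyshev_cone n (chebyshev_U n)"
proof (induction n rule: induct_nat_012)
  case 0
  then show ?case using chebyshev_cone_chebyshev_T[of 0 0 1] by (simp add: one_pCons)
next
  case 1
  then show ?case using chebyshev_cone_chebyshev_T[of 1 1 2] by simp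
next
  case (ge2 n)
  then have "chebyshev_cone (Suc (Suc n)) (chebyshev_U n)"
    using chebyshev_cone_mono by auto
  then show ?case
    unfolding chebyshev_U_Suc_Suc_eq by (intro chebyshev_cone.add_T) auto
qed

lemma chebyshev_cone_abs_poly_le:
  "chebyshev_cone M p \<Longrightarrow> \<bar>x\<bar> \<le> 1 \<Longrightarrow> \<bar>poly p x\<bar> \<le> poly p 1"
proof (induction p rule: chebyshev_cone.induct)
  case (add_T q c j)
  have "\<bar>c * poly (chebyshev_T j) x\<bar> \<le> c"
    using abs_poly_chebyshev_T_le_1[OF add_T.prems, of j] \<open>0 \<le> c\<close>
    by (simp add: abs_mult mult_left_le)
  then show ?case using add_T by (simp add: poly_chebyshev_T_1)
qed simp

lemma chebyshev_cone_poly_1_nonneg: "chebyshev_cone M p \<Longrightarrow> 0 \<le> poly p 1"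
  using chebyshev_cone_abs_poly_le[of M p 1] by simp

lemma chebyshev_cone_pderiv:
  assumes "chebyshev_cone M p"
  shows "chebyshev_cone (M - 1) (pderiv p) \<and> poly (pderiv p) 1 \<le> (real M)\<^sup>2 * poly p 1"
  using assms
proof (induction p rule: chebyshev_cone.induct)
  case (add_T q c j)
  show ?case
  proof (cases j)
    case 0
    have "0 \<le> (real M)\<^sup>2 * c" using \<open>0 \<le> c\<close> by simp
    with add_T.IH 0 show ?thesis
      by (simp add: pderiv_add pderiv_smult poly_chebyshev_T_1 distrib_left)
  next
    case (Suc i)
    have "real (Suc i) \<le> real M" using Suc \<open>j \<le> M\<close> by simp
    then have "c * (real (Suc i) * real (Suc i)) \<le> c * (real M * real M)"
      using \<open>0 \<le> c\<close> by (intro mult_left_mono mult_mono) auto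
    then have "c * real (Suc i) * (real i + 1) \<le> (real M)\<^sup>2 * c"
      by (simp add: power2_eq_square algebra_simps)
    moreover have "pderiv (q + smult c (chebyshev_T j)) =
        pderiv q + smult (c * real (Suc i)) (chebyshev_U i)"
      using Suc by (simp add: pderiv_add pderiv_smult pderiv_chebyshev_T)
    moreover have "chebyshev_cone (M - 1) (smult (c * real (Suc i)) (chebyshev_U i))"
      using Suc add_T.hyps
      by (intro chebyshev_cone_smult chebyshev_cone_mono[OF chebyshev_cone_chebyshev_U]) auto
    ultimately show ?thesis using add_T.IH
      by (auto simp: chebyshev_cone_add poly_chebyshev_U_1 poly_chebyshev_T_1 algebra_simps)
  qed
qed (simp add: chebyshev_cone.zero)

lemma chebyshev_cone_higher_pderiv:
  assumes "chebyshev_cone M p"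
  shows "chebyshev_cone (M - k) ((pderiv ^^ k) p) \<and>
         poly ((pderiv ^^ k) p) 1 \<le> (real M) ^ (2 * k) * poly p 1"
proof (induction k)
  case (Suc k)
  then have cone: "chebyshev_cone (M - k) ((pderiv ^^ k) p)"
    and IH: "poly ((pderiv ^^ k) p) 1 \<le> (real M) ^ (2 * k) * poly p 1" by auto
  have "poly ((pderiv ^^ Suc k) p) 1 \<le> (real (M - k))\<^sup>2 * poly ((pderiv ^^ k) p) 1"
    using chebyshev_cone_pderiv[OF cone] by simp
  also have "\<dots> \<le> (real M)\<^sup>2 * poly ((pderiv ^^ k) p) 1"
    using chebyshev_cone_poly_1_nonneg[OF cone] by (intro mult_right_mono power_mono) auto
  also have "\<dots> \<le> (real M)\<^sup>2 * ((real M) ^ (2 * k) * poly p 1)"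
    using IH by (intro mult_left_mono) auto
  also have "\<dots> = (real M) ^ (2 * Suc k) * poly p 1"
    by (simp add: power_add power2_eq_square mult.assoc)
  finally have "poly ((pderiv ^^ Suc k) p) 1 \<le> (real M) ^ (2 * Suc k) * poly p 1" .
  then show ?case
    using chebyshev_cone_pderiv[OF cone] by simp
qed (simp add: assms)

lemma chebyshev_cone_SUP_higher_pderiv_le:
  assumes "chebyshev_cone M p"
  shows "(SUP r\<in>{0..1::real}. \<bar>poly ((pderiv ^^ k) p) r\<bar>) \<le> (real M) ^ (2 * k) * poly p 1"
proof (rule cSUP_least)
  fix r :: real
  assume "r \<in> {0..1}"
  then show "\<bar>poly ((pderiv ^^ k) p) r\<bar> \<le> (real M) ^ (2 * k) * poly p 1"
    using chebyshev_cone_higher_pderiv[OF assms, of k]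
      chebyshev_cone_abs_poly_le[of "M - k" "(pderiv ^^ k) p" r] by auto
qed simp

section \<open>Zernike radial polynomials as nonnegative Chebyshev combinations\<close>

(* R_m^n is written as zernike_radial (a+b) (a-b) with a = (m+n)/2 and b = (m-n)/2. *)

lemma poly_zernike_radial:
  assumes "b \<le> a"
  shows "poly (zernike_radial (a+b) (a-b)) x =
    (\<Sum>j\<le>b. (-1)^j * fact (a+b-j) / (fact j * fact (a-j) * fact (b-j)) * x^(a+b-2*j))"
proof -
  have 1: "(a + b - (a - b)) div 2 = b" "(a + b + (a - b)) div 2 = a" using assms by auto
  show ?thesis unfolding zernike_radial_def 1 by (simp add: poly_sum poly_monom)
qed

lemma sum_choose_triple_product:
  assumes "j \<le> b" "b \<le> a"
  shows "(\<Sum>i\<le>b. (a choose i) * (b choose i) * (i choose j)) =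
    (a choose j) * ((a + b - j) choose (b - j))"
proof -
  let ?g = "\<lambda>i. (a choose i) * (b choose i) * (i choose j)"
  have "(\<Sum>i\<le>b. ?g i) = (\<Sum>i\<in>{j..b}. ?g i)"
    by (rule sum.mono_neutral_right) auto
  also have "\<dots> = (\<Sum>t\<in>{0..b-j}. ?g (t + j))"
    using sum.shift_bounds_cl_nat_ivl[of ?g 0 j "b-j"] assms by simp
  also have "\<dots> = (\<Sum>t\<le>b-j. (a choose j) * (((a - j) choose t) * (b choose (b - j - t))))"
  proof (intro sum.cong)
    fix t assume t: "t \<in> {..b-j}"
    have "(a choose (t+j)) * ((t+j) choose j) = (a choose j) * ((a - j) choose t)"
    proof (cases "t + j \<le> a")
      case True then show ?thesis using choose_mult[of j "t+j" a] by simp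
    next
      case False then show ?thesis by (simp add: binomial_eq_0) arith
    qed
    moreover have "b choose (t + j) = b choose (b - j - t)"
      using t assms binomial_symmetric[of "t+j" b] by (simp add: algebra_simps)
    ultimately show "?g (t + j) = (a choose j) * (((a - j) choose t) * (b choose (b - j - t)))"
      by (metis mult.commute mult.left_commute)
  qed (auto simp: atLeast0AtMost)
  also have "\<dots> = (a choose j) * ((a - j + b) choose (b - j))"
    using vandermonde[where r="b-j" and m="a-j" and n=b] by (simp add: sum_distrib_left[symmetric])
  finally show ?thesis using assms by simp
qed

lemma sum_choose_triple_product_real:
  assumes "j \<le> b" "b \<le> a"
  shows "(\<Sum>i\<le>b. real (a choose i) * real (b choose i) * real (i choose j)) =
    fact (a+b-j) / (fact j * fact (a-j) * fact (b-j))"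
proof -
  have "(\<Sum>i\<le>b. real (a choose i) * real (b choose i) * real (i choose j)) =
      real ((a choose j) * ((a + b - j) choose (b - j)))"
    using arg_cong[OF sum_choose_triple_product[OF assms], of real] by simp
  also have "\<dots> = fact a / (fact j * fact (a - j)) * (fact (a+b-j) / (fact (b-j) * fact a))"
    using assms by (simp add: binomial_fact)
  also have "\<dots> = fact (a+b-j) / (fact j * fact (a-j) * fact (b-j))"
    by (simp add: divide_simps)
  finally show ?thesis .
qed

lemma signed_power_mult_one_minus_square:
  fixes x :: real
  assumes "i \<le> b" and "2 * b \<le> n"
  shows "(-1)^i * x^(n - 2*i) * (1 - x^2)^i = (\<Sum>j\<le>b. (-1)^j * real (i choose j) * x^(n - 2*j))"
proof -
  have "(1 - x^2)^i = (\<Sum>j\<le>i. real (i choose j) * (-(x^2))^(i-j))"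
    using binomial_ring[of 1 "-(x^2)" i] by simp
  also have "\<dots> = (\<Sum>j\<le>b. real (i choose j) * (-(x^2))^(i-j))"
    using assms(1) by (intro sum.mono_neutral_left) auto
  finally have "(-1)^i * x^(n - 2*i) * (1 - x^2)^i =
      (\<Sum>j\<le>b. (-1)^i * x^(n - 2*i) * (real (i choose j) * (-(x^2))^(i-j)))"
    by (simp add: sum_distrib_left)
  also have "\<dots> = (\<Sum>j\<le>b. (-1)^j * real (i choose j) * x^(n - 2*j))"
  proof (intro sum.cong refl)
    fix j
    show "(-1)^i * x^(n - 2*i) * (real (i choose j) * (-(x^2))^(i-j)) =
        (-1)^j * real (i choose j) * x^(n - 2*j)"
    proof (cases "j \<le> i")
      case True
      then obtain d where d: "i = j + d" using le_Suc_ex by blast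
      have "n - 2 * j = (n - 2 * i) + 2 * d" using assms d by auto
      moreover have "(-(x^2))^d = (-1)^d * x^(2*d)" by (subst power_minus) (simp add: power_mult)
      ultimately show ?thesis unfolding d by (simp add: power_add mult_ac)
    qed simp
  qed
  finally show ?thesis .
qed

lemma poly_zernike_radial_eq_binomial_sum:
  assumes "b \<le> a"
  shows "poly (zernike_radial (a+b) (a-b)) x =
    (\<Sum>i\<le>b. (-1)^i * real (a choose i) * real (b choose i) * x^(a+b-2*i) * (1 - x^2)^i)"
proof -
  have "(\<Sum>i\<le>b. (-1)^i * real (a choose i) * real (b choose i) * x^(a+b-2*i) * (1 - x^2)^i)
      = (\<Sum>i\<le>b. \<Sum>j\<le>b. real (a choose i) * real (b choose i) * ((-1)^j * real (i choose j) * x^(a+b-2*j)))"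
  proof (intro sum.cong refl)
    fix i assume "i \<in> {..b}"
    then have "(-1)^i * x^(a+b-2*i) * (1 - x^2)^i = (\<Sum>j\<le>b. (-1)^j * real (i choose j) * x^(a+b-2*j))"
      using assms by (intro signed_power_mult_one_minus_square) auto
    then show "(-1)^i * real (a choose i) * real (b choose i) * x^(a+b-2*i) * (1 - x^2)^i =
        (\<Sum>j\<le>b. real (a choose i) * real (b choose i) * ((-1)^j * real (i choose j) * x^(a+b-2*j)))"
      by (simp add: sum_distrib_left[symmetric] mult_ac)
  qed
  also have "\<dots> = (\<Sum>j\<le>b. (-1)^j *
      (\<Sum>i\<le>b. real (a choose i) * real (b choose i) * real (i choose j)) * x^(a+b-2*j))"
    by (subst sum.swap) (simp add: sum_distrib_left sum_distrib_right mult_ac)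
  also have "\<dots> = (\<Sum>j\<le>b. (-1)^j * fact (a+b-j) / (fact j * fact (a-j) * fact (b-j)) * x^(a+b-2*j))"
    using sum_choose_triple_product_real assms by (intro sum.cong refl) simp
  finally show ?thesis using poly_zernike_radial[OF assms] by simp
qed

lemma poly_zernike_radial_1: "b \<le> a \<Longrightarrow> poly (zernike_radial (a+b) (a-b)) 1 = 1"
  unfolding poly_zernike_radial_eq_binomial_sum by (simp add: power_0_left if_distrib cong: if_cong)

lemma coeff_linear_poly_power:
  fixes \<alpha> \<beta> :: "'a::comm_ring_1"
  shows "coeff ([:\<alpha>, \<beta>:]^u) k = of_nat (u choose k) * \<beta>^k * \<alpha>^(u-k)"
proof -
  have e: "[:\<alpha>, \<beta>:] = monom \<beta> 1 + monom \<alpha> 0"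
    by (simp add: monom_0 monom_Suc)
  have "[:\<alpha>, \<beta>:]^u = (\<Sum>j\<le>u. monom (of_nat (u choose j) * \<beta>^j * \<alpha>^(u-j)) j)"
    unfolding e binomial_ring
    by (intro sum.cong refl) (simp add: monom_power of_nat_poly mult_monom monom_0[symmetric])
  then show ?thesis
    by (simp add: coeff_sum binomial_eq_0)
qed

lemma coeff_linear_poly_powers_mult:
  fixes \<alpha> \<beta> \<gamma> \<delta> :: "'a::comm_ring_1"
  shows "coeff ([:\<alpha>, \<beta>:]^u * [:\<gamma>, \<delta>:]^v) t =
     (\<Sum>k\<le>t. (of_nat (u choose k) * \<beta>^k * \<alpha>^(u-k)) *
       (of_nat (v choose (t-k)) * \<delta>^(t-k) * \<gamma>^(v-(t-k))))"
  by (simp add: coeff_mult coeff_linear_poly_power)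

lemma zernike_radial_cos_eq_coeff:
  assumes "b \<le> a"
  shows "complex_of_real (poly (zernike_radial (a+b) (a-b)) (cos \<phi>)) =
    coeff ([:complex_of_real (cos \<phi>), complex_of_real (sin \<phi>):]^b *
      [:- complex_of_real (sin \<phi>), complex_of_real (cos \<phi>):]^a) a"
proof -
  let ?c = "cos \<phi>" and ?s = "sin \<phi>"
  let ?t = "\<lambda>i. (-1)^i * real (a choose i) * real (b choose i) * ?c^(a+b-2*i) * (?s^2)^i"
  have "poly (zernike_radial (a+b) (a-b)) ?c = (\<Sum>i\<le>b. ?t i)"
    unfolding poly_zernike_radial_eq_binomial_sum[OF assms] by (simp add: sin_squared_eq)
  then have "complex_of_real (poly (zernike_radial (a+b) (a-b)) ?c) = (\<Sum>i\<le>b. complex_of_real (?t i))"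
    by simp
  also have "\<dots> = (\<Sum>k\<le>a. (of_nat (b choose k) * complex_of_real ?s ^ k * complex_of_real ?c ^ (b - k)) *
       (of_nat (a choose (a - k)) * complex_of_real ?c ^ (a - k) * (- complex_of_real ?s) ^ (a - (a - k))))"
  proof -
    have "(\<Sum>k\<le>a. (of_nat (b choose k) * complex_of_real ?s ^ k * complex_of_real ?c ^ (b - k)) *
       (of_nat (a choose (a - k)) * complex_of_real ?c ^ (a - k) * (- complex_of_real ?s) ^ (a - (a - k))))
       = (\<Sum>k\<le>b. (of_nat (b choose k) * complex_of_real ?s ^ k * complex_of_real ?c ^ (b - k)) *
       (of_nat (a choose (a - k)) * complex_of_real ?c ^ (a - k) * (- complex_of_real ?s) ^ (a - (a - k))))"
      using assms by (intro sum.mono_neutral_right) (auto simp: binomial_eq_0)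
    also have "\<dots> = (\<Sum>i\<le>b. complex_of_real (?t i))"
    proof (intro sum.cong refl)
      fix k assume k: "k \<in> {..b}"
      then have k': "k \<le> b" "k \<le> a" using assms by auto
      have 1: "a - (a - k) = k" "a + b - 2 * k = (b - k) + (a - k)" using k' by auto
      have 2: "a choose (a - k) = a choose k" using k' binomial_symmetric[of k a] by simp
      have 3: "(- complex_of_real ?s) ^ k = (-1)^k * complex_of_real ?s ^ k"
        by (metis mult_minus1 power_mult_distrib)
      show "(of_nat (b choose k) * complex_of_real ?s ^ k * complex_of_real ?c ^ (b - k)) *
       (of_nat (a choose (a - k)) * complex_of_real ?c ^ (a - k) * (- complex_of_real ?s) ^ (a - (a - k)))
         = complex_of_real (?t k)"
        unfolding 1 2 3 by (simp add: power_add power_mult[symmetric] mult_ac power2_eq_square power_mult_distrib)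
    qed
    finally show ?thesis by simp
  qed
  also have "\<dots> = coeff ([:complex_of_real ?c, complex_of_real ?s:]^b * [:- complex_of_real ?s, complex_of_real ?c:]^a) a"
    unfolding coeff_linear_poly_powers_mult ..
  finally show ?thesis .
qed

lemma pCons_neg_sin_cos_eq_cis:
  "[:- complex_of_real (sin \<phi>), complex_of_real (cos \<phi>):] =
    smult (cis \<phi> / 2) [:\<i>,1:] + smult (cis (-\<phi>) / 2) [:-\<i>,1:]"
  by (simp add: complex_eq_iff)

lemma pCons_cos_sin_eq_cis:
  "[:complex_of_real (cos \<phi>), complex_of_real (sin \<phi>):] =
    smult (cis \<phi> / (2*\<i>)) [:\<i>,1:] + smult (- cis (-\<phi>) / (2*\<i>)) [:-\<i>,1:]"
  by (simp add: complex_eq_iff)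

lemma coeff_binomial_product_expand:
  fixes A B C D :: "'a::comm_ring_1" and P Q :: "'a poly"
  shows "coeff ((smult A P + smult B Q)^b * (smult C P + smult D Q)^a) t =
    (\<Sum>l\<le>b. \<Sum>k\<le>a. of_nat (b choose l) * of_nat (a choose k) * A^l * B^(b-l) * C^k * D^(a-k)
        * coeff (P^l * P^k * Q^(b-l) * Q^(a-k)) t)"
proof -
  have "(smult A P + smult B Q)^b * (smult C P + smult D Q)^a =
     (\<Sum>l\<le>b. \<Sum>k\<le>a. smult (of_nat (b choose l) * of_nat (a choose k) * A^l * B^(b-l) * C^k * D^(a-k))
        (P^l * P^k * Q^(b-l) * Q^(a-k)))"
    unfolding binomial_ring sum_product
    by (intro sum.cong refl) (simp add: smult_power of_nat_poly mult_ac)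
  then show ?thesis by (simp add: coeff_sum)
qed

lemma sum_sum_regroup_diagonal:
  fixes f :: "nat \<Rightarrow> nat \<Rightarrow> 'a::comm_ring_1"
  assumes "\<And>l k. b < l \<Longrightarrow> f l k = 0" "\<And>l k. a < k \<Longrightarrow> f l k = 0"
  shows "(\<Sum>l\<le>b. \<Sum>k\<le>a. f l k * h (l+k)) = (\<Sum>p\<le>a+b. (\<Sum>l\<le>p. f l (p-l)) * h p)"
proof -
  let ?g = "\<lambda>i j. f i j * h (i+j)"
  have fin: "finite {(i,j). i+j \<le> a+b}"
    by (rule finite_subset[of _ "{..a+b} \<times> {..a+b}"]) auto
  have "(\<Sum>l\<le>b. \<Sum>k\<le>a. ?g l k) = (\<Sum>(i,j)\<in>{..b} \<times> {..a}. ?g i j)"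
    by (simp add: sum.cartesian_product)
  also have "\<dots> = (\<Sum>(i,j)\<in>{(i,j). i+j \<le> a+b}. ?g i j)"
  proof (rule sum.mono_neutral_left[OF fin])
    show "\<forall>i\<in>{(i,j). i+j \<le> a+b} - {..b} \<times> {..a}. (case i of (i,j) \<Rightarrow> ?g i j) = 0"
      using assms by clarsimp (metis mult_zero_left not_le)
  qed auto
  also have "\<dots> = (\<Sum>p\<le>a+b. \<Sum>i\<le>p. ?g i (p - i))"
    by (rule sum.triangle_reindex_eq)
  also have "\<dots> = (\<Sum>p\<le>a+b. (\<Sum>l\<le>p. f l (p-l)) * h p)"
    by (intro sum.cong refl) (simp add: sum_distrib_right)
  finally show ?thesis .
qed

lemma binomial_product_term_regroup:
  fixes E F :: complex and P Q :: "complex poly"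
  assumes "l \<le> b" "k \<le> a"
  shows "of_nat (b choose l) * of_nat (a choose k) *
        (E/(2*\<i>))^l * (-F/(2*\<i>))^(b-l) * (E/2)^k * (F/2)^(a-k)
        * coeff (P^l * P^k * Q^(b-l) * Q^(a-k)) t =
     (of_nat (b choose l) * of_nat (a choose k) * (-1)^(b-l)) *
     ((1/2)^a * (1/(2*\<i>))^b * E^(l+k) * F^(a+b-(l+k)) * coeff (P^(l+k) * Q^(a+b-(l+k))) t)"
proof -
  obtain l' where l': "b = l + l'" using assms le_Suc_ex by blast
  obtain k' where k': "a = k + k'" using assms le_Suc_ex by blast
  have 1: "b - l = l'" "a - k = k'" "a + b - (l + k) = l' + k'" using l' k' by auto
  have 2: "(-F/(2*\<i>))^l' = (-1)^l' * (F^l' * (1/(2*\<i>))^l')"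
    by (metis (no_types, lifting) mult_minus1 power_mult_distrib times_divide_eq_right mult_1_right)
  have 3: "(E/(2*\<i>))^l = E^l * (1/(2*\<i>))^l" "(E/2)^k = E^k * (1/2)^k" "(F/2)^k' = F^k' * (1/2)^k'"
    by (metis mult_1_right power_mult_distrib times_divide_eq_right)+
  show ?thesis unfolding 1 2 3 unfolding l' k'
    by (simp only: power_add mult_ac)
qed

lemma choose_trinomial_swap:
  assumes "u \<le> a" "u \<le> p" "p - u \<le> b"
  shows "real ((a+b) choose p) * real (p choose u) * real ((a+b-p) choose (a-u)) =
         real ((a+b) choose a) * real (a choose u) * real (b choose (p-u))"
proof -
  obtain r where r: "b = (p - u) + r" using assms le_Suc_ex by blast
  obtain q where q: "p = u + q" using assms le_Suc_ex by blast
  obtain e where e: "a = u + e" using assms le_Suc_ex by blast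
  have 1: "p - u = q" "a + b - p = e + r" "a - u = e" "a + b - a = b" "b - q = r" "e + r - e = r"
    using q r e by auto
  have h0: "real ((a+b) choose p) = fact (a+b) / (fact p * fact (e + r))"
    using binomial_fact[of p "a+b"] assms 1 q r e by simp
  have h1: "real (p choose u) = fact p / (fact u * fact q)"
    using binomial_fact[of u p] assms q by simp
  have h2: "real ((a+b-p) choose (a-u)) = fact (e+r) / (fact e * fact r)"
    using binomial_fact[of e "e+r"] 1 by simp
  have h3: "real ((a+b) choose a) = fact (a+b) / (fact a * fact b)"
    using binomial_fact[of a "a+b"] by simp
  have h4: "real (a choose u) = fact a / (fact u * fact e)"
    using binomial_fact[of u a] e by simp
  have h5: "real (b choose (p-u)) = fact b / (fact q * fact r)"
    using binomial_fact[of q b] r 1 by simp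
  show ?thesis unfolding h0 h1 h2 h3 h4 h5 by (simp add: field_simps)
qed

lemma coeff_pCons_i_powers:
  assumes p: "p \<le> a + b"
  shows "of_nat ((a+b) choose p) * coeff ([:\<i>, 1:]^p * [:-\<i>, 1:]^(a+b-p)) a =
     of_nat ((a+b) choose a) * \<i>^b *
       (\<Sum>u\<le>p. of_nat (a choose u) * of_nat (b choose (p-u)) * (-1)^(b-(p-u)) :: complex)"
proof -
  let ?T1 = "\<lambda>u. of_nat ((a+b) choose p) *
    ((of_nat (p choose u) * 1^u * \<i>^(p-u)) *
     (of_nat ((a+b-p) choose (a-u)) * 1^(a-u) * (-\<i>)^(a+b-p-(a-u)))) :: complex"
  let ?T2 = "\<lambda>u. of_nat ((a+b) choose a) * \<i>^b *
    (of_nat (a choose u) * of_nat (b choose (p-u)) * (-1)^(b-(p-u))) :: complex"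
  have "of_nat ((a+b) choose p) * coeff ([:\<i>, 1:]^p * [:-\<i>, 1:]^(a+b-p)) a = (\<Sum>u\<le>a. ?T1 u)"
    unfolding coeff_linear_poly_powers_mult sum_distrib_left ..
  also have "\<dots> = (\<Sum>u\<in>{..a} \<inter> {..p}. ?T1 u)"
    by (rule sum.mono_neutral_right) (auto simp: binomial_eq_0)
  also have "\<dots> = (\<Sum>u\<in>{..a} \<inter> {..p}. ?T2 u)"
  proof (rule sum.cong[OF refl])
    fix u assume u: "u \<in> {..a} \<inter> {..p}"
    show "?T1 u = ?T2 u"
    proof (cases "p - u \<le> b")
      case True
      obtain r where r: "b = (p - u) + r" using True le_Suc_ex by blast
      have e1: "a + b - p - (a - u) = r" "b - (p - u) = r" using r u p by auto
      have t: "real ((a+b) choose p) * real (p choose u) * real ((a+b-p) choose (a-u)) =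
         real ((a+b) choose a) * real (a choose u) * real (b choose (p-u))"
        using choose_trinomial_swap[of u a p b] u True by auto
      have t': "(of_nat ((a+b) choose p) * of_nat (p choose u) * of_nat ((a+b-p) choose (a-u)) :: complex) =
         of_nat ((a+b) choose a) * of_nat (a choose u) * of_nat (b choose (p-u))"
        using arg_cong[OF t, of complex_of_real] by simp
      have ib: "\<i>^b = \<i>^(p-u) * \<i>^r" using r by (simp add: power_add)
      have mi: "(-\<i>)^r = (-1)^r * \<i>^r" by (metis mult_minus1 power_mult_distrib)
      show ?thesis unfolding e1 ib mi
        using t' by (simp add: mult_ac)
    next
      case False
      then have "(a+b-p) < (a-u)" using u p by auto
      then show ?thesis using False by (simp add: binomial_eq_0)
    qed
  qed
  also have "\<dots> = (\<Sum>u\<le>p. ?T2 u)"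
    by (rule sum.mono_neutral_left) (auto simp: binomial_eq_0)
  finally show ?thesis by (simp add: sum_distrib_left)
qed

definition signed_vandermonde :: "nat \<Rightarrow> nat \<Rightarrow> nat \<Rightarrow> real" where
  "signed_vandermonde a b p = (\<Sum>u\<le>p. real (a choose u) * real (b choose (p-u)) * (-1)^(b-(p-u)))"

(* The coefficient of cos((2p-a-b) phi) in R_(a+b)^(a-b)(cos phi). *)

definition zernike_cos_coeff :: "nat \<Rightarrow> nat \<Rightarrow> nat \<Rightarrow> real" where
  "zernike_cos_coeff a b p =
    (1/2)^(a+b) * real ((a+b) choose a) / real ((a+b) choose p) * (signed_vandermonde a b p)^2"

lemma zernike_cos_coeff_nonneg: "0 \<le> zernike_cos_coeff a b p"
  unfolding zernike_cos_coeff_def by simp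

lemma signed_vandermonde_reindex:
  "(\<Sum>l\<le>p. (of_nat (b choose l) * of_nat (a choose (p-l)) * (-1)^(b-l) :: complex)) =
    complex_of_real (signed_vandermonde a b p)"
proof -
  have "(\<Sum>l\<le>p. (of_nat (b choose l) * of_nat (a choose (p-l)) * (-1)^(b-l) :: complex))
      = (\<Sum>l\<in>{0..p}. (of_nat (b choose l) * of_nat (a choose (p-l)) * (-1)^(b-l) :: complex))"
    by (simp add: atMost_atLeast0)
  also have "\<dots> = (\<Sum>u\<in>{0..p}. (of_nat (b choose (p-u)) * of_nat (a choose (p-(p-u))) * (-1)^(b-(p-u)) :: complex))"
    by (subst sum.atLeastAtMost_rev) simp
  also have "\<dots> = (\<Sum>u\<le>p. complex_of_real (real (a choose u) * real (b choose (p-u)) * (-1)^(b-(p-u))))"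
    by (intro sum.cong) (auto simp: atMost_atLeast0)
  finally show ?thesis unfolding signed_vandermonde_def by simp
qed

lemma binomial_product_coeff_eq:
  fixes E F :: complex
  assumes p: "p \<le> a + b"
  shows "(\<Sum>l\<le>p. (of_nat (b choose l) * of_nat (a choose (p-l)) * (-1)^(b-l) :: complex)) *
     ((1/2)^a * (1/(2*\<i>))^b * E^p * F^(a+b-p) * coeff ([:\<i>,1:]^p * [:-\<i>,1:]^(a+b-p)) a)
     = complex_of_real (zernike_cos_coeff a b p) * E^p * F^(a+b-p)"
proof -
  let ?G = "complex_of_real (signed_vandermonde a b p)"
  let ?B1 = "of_nat ((a+b) choose a) :: complex" and ?B2 = "of_nat ((a+b) choose p) :: complex"
  have B2: "?B2 \<noteq> 0" using p by simp
  have "(\<Sum>u\<le>p. of_nat (a choose u) * of_nat (b choose (p-u)) * (-1)^(b-(p-u)) :: complex) = ?G"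
    unfolding signed_vandermonde_def by simp
  then have c: "coeff ([:\<i>,1:]^p * [:-\<i>,1:]^(a+b-p)) a = ?B1 * \<i>^b * ?G / ?B2"
    using coeff_pCons_i_powers[OF p] B2 by (simp add: field_simps)
  have k: "complex_of_real (zernike_cos_coeff a b p) = (1/2)^a * (1/2)^b * ?B1 / ?B2 * ?G * ?G"
    unfolding zernike_cos_coeff_def by (simp add: power_add power2_eq_square)
  have i_pow: "(1/(2*\<i>))^b * \<i>^b = (1/2::complex)^b"
    by (simp add: power_mult_distrib[symmetric])
  have "?G * ((1/2)^a * (1/(2*\<i>))^b * E^p * F^(a+b-p) * (?B1 * \<i>^b * ?G / ?B2))
      = ((1/(2*\<i>))^b * \<i>^b) * (1/2)^a * ?B1 / ?B2 * ?G * ?G * E^p * F^(a+b-p)"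
    by (simp add: mult_ac)
  also have "\<dots> = complex_of_real (zernike_cos_coeff a b p) * E^p * F^(a+b-p)"
    unfolding i_pow k by (simp add: mult_ac)
  finally show ?thesis unfolding signed_vandermonde_reindex c .
qed

lemma zernike_radial_cos_eq_sum_cis:
  assumes ab: "b \<le> a"
  shows "complex_of_real (poly (zernike_radial (a+b) (a-b)) (cos \<phi>)) =
     (\<Sum>p\<le>a+b. complex_of_real (zernike_cos_coeff a b p) * cis \<phi> ^ p * cis (-\<phi>) ^ (a+b-p))"
proof -
  define E where "E = cis \<phi>"
  define F where "F = cis (-\<phi>)"
  define P where "P = [:\<i>, 1::complex:]"
  define Q where "Q = [:-\<i>, 1::complex:]"
  let ?f = "\<lambda>l k. (of_nat (b choose l) * of_nat (a choose k) * (-1)^(b-l) :: complex)"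
  let ?h = "\<lambda>p. (1/2)^a * (1/(2*\<i>))^b * E^p * F^(a+b-p) * coeff (P^p * Q^(a+b-p)) a"
  have "complex_of_real (poly (zernike_radial (a+b) (a-b)) (cos \<phi>)) =
     coeff ((smult (E/(2*\<i>)) P + smult (-F/(2*\<i>)) Q)^b * (smult (E/2) P + smult (F/2) Q)^a) a"
    unfolding zernike_radial_cos_eq_coeff[OF ab] pCons_neg_sin_cos_eq_cis pCons_cos_sin_eq_cis
      E_def F_def P_def Q_def ..
  also have "\<dots> = (\<Sum>l\<le>b. \<Sum>k\<le>a. of_nat (b choose l) * of_nat (a choose k) *
        (E/(2*\<i>))^l * (-F/(2*\<i>))^(b-l) * (E/2)^k * (F/2)^(a-k)
        * coeff (P^l * P^k * Q^(b-l) * Q^(a-k)) a)"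
    by (rule coeff_binomial_product_expand)
  also have "\<dots> = (\<Sum>l\<le>b. \<Sum>k\<le>a. ?f l k * ?h (l+k))"
    by (intro sum.cong refl) (rule binomial_product_term_regroup, auto)
  also have "\<dots> = (\<Sum>p\<le>a+b. (\<Sum>l\<le>p. ?f l (p-l)) * ?h p)"
    by (rule sum_sum_regroup_diagonal[where f="?f" and h="?h"]) (simp_all add: binomial_eq_0)
  also have "\<dots> = (\<Sum>p\<le>a+b. complex_of_real (zernike_cos_coeff a b p) * E^p * F^(a+b-p))"
    unfolding P_def Q_def by (intro sum.cong refl) (rule binomial_product_coeff_eq, auto)
  finally show ?thesis unfolding E_def F_def .
qed

lemma zernike_radial_cos_eq_sum_cos:
  assumes ab: "b \<le> a"
  shows "poly (zernike_radial (a+b) (a-b)) (cos \<phi>) =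
     (\<Sum>p\<le>a+b. zernike_cos_coeff a b p * cos ((real p - real (a+b-p)) * \<phi>))"
proof -
  have "poly (zernike_radial (a+b) (a-b)) (cos \<phi>) =
      Re (complex_of_real (poly (zernike_radial (a+b) (a-b)) (cos \<phi>)))"
    by simp
  also have "\<dots> = (\<Sum>p\<le>a+b. Re (complex_of_real (zernike_cos_coeff a b p) * cis \<phi> ^ p * cis (-\<phi>) ^ (a+b-p)))"
    unfolding zernike_radial_cos_eq_sum_cis[OF ab] Re_sum ..
  also have "\<dots> = (\<Sum>p\<le>a+b. zernike_cos_coeff a b p * cos ((real p - real (a+b-p)) * \<phi>))"
  proof (intro sum.cong refl)
    fix p
    have "cis \<phi> ^ p * cis (-\<phi>) ^ (a+b-p) = cis ((real p - real (a+b-p)) * \<phi>)"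
      by (simp add: DeMoivre cis_mult algebra_simps)
    then show "Re (complex_of_real (zernike_cos_coeff a b p) * cis \<phi> ^ p * cis (-\<phi>) ^ (a+b-p)) =
        zernike_cos_coeff a b p * cos ((real p - real (a+b-p)) * \<phi>)"
      by (simp add: mult.assoc)
  qed
  finally show ?thesis .
qed

lemma poly_eq_if_eq_on_cos:
  fixes p q :: "real poly"
  assumes "\<And>\<phi>. poly p (cos \<phi>) = poly q (cos \<phi>)"
  shows "p = q"
proof -
  have "{-1..1} \<subseteq> {x. poly (p - q) x = 0}"
  proof
    fix x :: real
    assume "x \<in> {-1..1}"
    then show "x \<in> {x. poly (p - q) x = 0}"
      using assms[of "arccos x"] by (simp add: cos_arccos)
  qed
  moreover have "infinite {-1..1::real}" by simp
  ultimately have "infinite {x. poly (p - q) x = 0}"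
    using finite_subset by blast
  then have "p - q = 0" using poly_roots_finite by blast
  then show ?thesis by simp
qed

lemma zernike_radial_eq_sum_chebyshev_T:
  assumes ab: "b \<le> a"
  shows "zernike_radial (a+b) (a-b) =
    (\<Sum>p\<le>a+b. smult (zernike_cos_coeff a b p) (chebyshev_T (nat \<bar>int p - int (a+b-p)\<bar>)))"
    (is "?R = ?S")
proof -
  have "poly ?R (cos \<phi>) = poly ?S (cos \<phi>)" for \<phi>
  proof -
    have "poly ?S (cos \<phi>) =
        (\<Sum>p\<le>a+b. zernike_cos_coeff a b p * cos (real (nat \<bar>int p - int (a+b-p)\<bar>) * \<phi>))"
      by (simp add: poly_sum poly_chebyshev_T_cos)
    also have "\<dots> = (\<Sum>p\<le>a+b. zernike_cos_coeff a b p * cos ((real p - real (a+b-p)) * \<phi>))"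
    proof (intro sum.cong refl)
      fix p
      have "real (nat \<bar>int p - int (a+b-p)\<bar>) = \<bar>real p - real (a+b-p)\<bar>" by linarith
      moreover have "cos (\<bar>y\<bar> * \<phi>) = cos (y * \<phi>)" for y :: real
        by (cases "y \<ge> 0") (auto simp: abs_if)
      ultimately show "zernike_cos_coeff a b p * cos (real (nat \<bar>int p - int (a+b-p)\<bar>) * \<phi>) =
          zernike_cos_coeff a b p * cos ((real p - real (a+b-p)) * \<phi>)"
        by simp
    qed
    finally show ?thesis using zernike_radial_cos_eq_sum_cos[OF ab] by simp
  qed
  then show ?thesis by (rule poly_eq_if_eq_on_cos)
qed

lemma chebyshev_cone_zernike_radial: "b \<le> a \<Longrightarrow> chebyshev_cone (a+b) (zernike_radial (a+b) (a-b))"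
  unfolding zernike_radial_eq_sum_chebyshev_T
  by (intro chebyshev_cone_sum chebyshev_cone_chebyshev_T zernike_cos_coeff_nonneg) auto

lemma zernike_radial_cone_and_at_1:
  assumes "n \<le> m" and "even (m - n)"
  shows "chebyshev_cone m (zernike_radial m n) \<and> poly (zernike_radial m n) 1 = 1"
proof -
  obtain b where "m - n = 2 * b" using assms(2) by (rule evenE)
  then have "b \<le> b + n" and "m = (b + n) + b" and "n = (b + n) - b"
    using assms(1) by auto
  then show ?thesis
    using chebyshev_cone_zernike_radial poly_zernike_radial_1 by metis
qed

theorem propositionB2:
  fixes k m :: nat and l :: int
  assumes "\<bar>l\<bar> \<le> int m" and "even (int m - \<bar>l\<bar>)"
  shows "(SUP r\<in>{0..1::real}. \<bar>poly ((pderiv ^^ k) (zernike_radial m (nat \<bar>l\<bar>))) r\<bar>)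
           \<le> real m ^ (2 * k) \<and>
         (SUP s\<in>{0..1::real}. \<bar>poly ((pderiv ^^ k) (chebyshev_U m)) s\<bar>)
           \<le> (real m + 1) * real m ^ (2 * k)"
proof
  have "nat \<bar>l\<bar> \<le> m" and "int (m - nat \<bar>l\<bar>) = int m - \<bar>l\<bar>"
    using assms(1) by auto
  then have "nat \<bar>l\<bar> \<le> m" and "even (m - nat \<bar>l\<bar>)"
    using assms(2) by (metis even_of_nat)+
  then show "(SUP r\<in>{0..1::real}. \<bar>poly ((pderiv ^^ k) (zernike_radial m (nat \<bar>l\<bar>))) r\<bar>)
      \<le> real m ^ (2 * k)"
    using zernike_radial_cone_and_at_1 chebyshev_cone_SUP_higher_pderiv_le by fastforce
  show "(SUP s\<in>{0..1::real}. \<bar>poly ((pderiv ^^ k) (chebyshev_U m)) s\<bar>)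
      \<le> (real m + 1) * real m ^ (2 * k)"
    using chebyshev_cone_SUP_higher_pderiv_le[OF chebyshev_cone_chebyshev_U[of m], of k]
    by (simp add: poly_chebyshev_U_1 mult.commute)
qed

end
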